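(* Let $S$ be a simple $(l,r)$-framed algebra, and let $C_S=\{\alpha\in\mathbb{Z}_2^{l+r}:S_{(0,\alpha)}\ne0\}$, $D_S=\{d\in\mathbb{Z}_2^{l+r}:\bigoplus_c S_{(d,c)}\neq 0\}$. Then (1) $C_S$ and $D_S$ are subgroups of $\mathbb{Z}_2^{l+r}$; (2) $|\alpha|\in2\mathbb{Z}$ and $|d|\in 8\mathbb{Z}$ for all $\alpha\in C_S$, $d\in D_S$; (3) $|\alpha d|\in2\mathbb{Z}$ for all $\alpha\in C_S$, $d\in D_S$.
   Context: Let $\mathrm{IS}=\{0,\frac12,\frac1{16}\}$ with fusion rule $\star$ (values are subsets): $0\star h=h\star0=\{h\}$, $\frac12\star\frac12=\{0\}$, $\frac12\star\frac1{16}=\frac1{16}\star\frac12=\{\frac1{16}\}$, $\frac1{16}\star\frac1{16}=\{0,\frac12\}$; $A(h_0,h_1,h_2,h_3)=\{h: h\in h_2\star h_3,\ h_0\in h_1\star h\}$. For $h\in A(h_0,h_1,h_2,h_3)$, $h'\in A(h_0,h_2,h_1,h_3)$ define $B^{h,h'}_{h_0,h_1,h_2,h_3}$: $B_{*,0,*,*}=B_{*,*,0,*}=1$; $B_{*,\frac12,\frac12,*}=-1$; $B_{a,\frac12,\frac1{16},a'}=B_{a,\frac1{16},\frac12,a'}=i$ if $a$ or $a'$ is $\frac12$, else $-i$; $B^{b,b'}_{a,\frac1{16},\frac1{16},a'}=e^{-\pi i/8}\cdot\{1$ if $a,a'\ne\frac1{16},a=a'$; $i$ if $a,a'\neq\frac1{16},a\ne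 a'$; $\frac{1+i}2$ if $a=a'=\frac1{16},b=b'$; $\frac{1-i}2$ if $a=a'=\frac1{16},b\neq b'\}$. $\mathrm{IS}^{(l,r)}=\mathrm{IS}^l\times\mathrm{IS}^r$, $\lambda=(h_1,..,h_l,\bar h_1,..,\bar h_r)$, $s(\lambda)=\sum h_i-\sum\bar h_j$; $\star$, $A$ componentwise; $B^{\lambda,\lambda'}_{\lambda^0,\dots,\lambda^3}=\prod_{i\le l}B^{h_i,h'_i}_{h^0_i,\dots,h^3_i}\prod_{j\le r}\overline{B^{\bar h_j,\bar h'_j}_{\bar h^0_j,\dots,\bar h^3_j}}$. An $(l,r)$-framed algebra: finite-dimensional $\mathrm{IS}^{(l,r)}$-graded $S=\bigoplus S_\lambda$ over $\mathbb{C}$ with bilinear product, nonzero $1\in S_0$, $a\cdot_\lambda b$ the $S_\lambda$-component of $a\cdot b$, satisfying (FA1) $S_\lambda=0$ unless $s(\lambda)\in\mathbb{Z}$; (FA2) $S_0=\mathbb{C}1$, $1$ a two-sided unit; (FA3) $S_{\lambda^1}\cdot S_{\lambda^2}\subset\bigoplus_{\lambda\in\lambda^1\star\lambda^2}S_\lambda$; (FA4) $a_2\cdot_{\lambda^0}(a_1\cdot_{\lambda'}a_3)=\sum_{\lambda\in A(\lambda^0,\lambda^1,\lambda^2,\lambda^3)}B^{\lambda,\lambda'}_{\lambda^0,\lambda^1,\lambda^2,\lambda^3}a_1\cdot_{\lambda^0}(a_2\cdot_\lambda a_3)$ for $a_i\in S_{\lambda^i}$, $\lambda'\in A(\lambda^0,\lambda^2,\lambda^1,\lambda^3)$.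 Ideal: graded subspace $M$ with $S\cdot M\subset M$; simple: only ideals $0$ and $S$. Identify $\mathrm{IS}$ with $\{(d,c)\in\mathbb{Z}_2^2:dc=0\}$ via $0\leftrightarrow(0,0)$, $\frac12\leftrightarrow(0,1)$, $\frac1{16}\leftrightarrow(1,0)$, and componentwise $\mathrm{IS}^{(l,r)}$ with pairs $(d,c)\in(\mathbb{Z}_2^{l+r})^2$ with $dc=0$ (componentwise product); $S_{(d,c)}$ is the corresponding graded piece. For $c\in\mathbb{Z}_2^{l+r}$, $|c|_l$, $|c|_r$ count ones in the first $l$, last $r$ coordinates, and $|c|=|c|_l-|c|_r$. *)

theory Defs
  imports "HOL-Analysis.Analysis" "HOL-Algebra.Group"
begin

datatype IS = I0 | Ihalf | I16

fun weight :: "IS \<Rightarrow> rat" where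
  "weight I0 = 0" | "weight Ihalf = 1/2" | "weight I16 = 1/16"

fun fusion :: "IS \<Rightarrow> IS \<Rightarrow> IS set" where
  "fusion I0 h = {h}"
| "fusion h I0 = {h}"
| "fusion Ihalf Ihalf = {I0}"
| "fusion Ihalf I16 = {I16}"
| "fusion I16 Ihalf = {I16}"
| "fusion I16 I16 = {I0, Ihalf}"

definition Aone :: "IS \<Rightarrow> IS \<Rightarrow> IS \<Rightarrow> IS \<Rightarrow> IS set" where
  "Aone h0 h1 h2 h3 = {h. h \<in> fusion h2 h3 \<and> h0 \<in> fusion h1 h}"

text \<open>Bone h h' h0 h1 h2 h3 is B^{h,h'}_{h0,h1,h2,h3}. The value 0 in the last case
  is never used: when h1 = h2 = 1/16 and A is nonempty, h0 = 1/16 iff h3 = 1/16.\<close>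
definition Bone :: "IS \<Rightarrow> IS \<Rightarrow> IS \<Rightarrow> IS \<Rightarrow> IS \<Rightarrow> IS \<Rightarrow> complex" where
  "Bone h h' h0 h1 h2 h3 =
    (if h1 = I0 \<or> h2 = I0 then 1
     else if h1 = Ihalf \<and> h2 = Ihalf then -1
     else if (h1 = Ihalf \<and> h2 = I16) \<or> (h1 = I16 \<and> h2 = Ihalf) then
       (if h0 = Ihalf \<or> h3 = Ihalf then \<i> else - \<i>)
     else exp (- (complex_of_real pi * \<i>) / 8) *
       (if h0 \<noteq> I16 \<and> h3 \<noteq> I16 then (if h0 = h3 then 1 else \<i>)
        else if h0 = I16 \<and> h3 = I16 then
          (if h = h' then (1 + \<i>) / 2 else (1 - \<i>) / 2)
        else 0))"

section \<open>Gradings IS^(l,r): functions nat => IS, equal to 0 outside {0..<l+r}\<close>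

definition Lam :: "nat \<Rightarrow> nat \<Rightarrow> (nat \<Rightarrow> IS) set" where
  "Lam l r = {x. \<forall>i\<ge>l+r. x i = I0}"

definition sgrade :: "nat \<Rightarrow> nat \<Rightarrow> (nat \<Rightarrow> IS) \<Rightarrow> rat" where
  "sgrade l r x = (\<Sum>i<l. weight (x i)) - (\<Sum>i\<in>{l..<l+r}. weight (x i))"

definition fusionL :: "nat \<Rightarrow> nat \<Rightarrow> (nat \<Rightarrow> IS) \<Rightarrow> (nat \<Rightarrow> IS) \<Rightarrow> (nat \<Rightarrow> IS) set" where
  "fusionL l r x1 x2 = {x \<in> Lam l r. \<forall>i<l+r. x i \<in> fusion (x1 i) (x2 i)}"

definition AL :: "nat \<Rightarrow> nat \<Rightarrow> (nat \<Rightarrow> IS) \<Rightarrow> (nat \<Rightarrow> IS) \<Rightarrow> (nat \<Rightarrow> IS) \<Rightarrow> (nat \<Rightarrow> IS)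
    \<Rightarrow> (nat \<Rightarrow> IS) set" where
  "AL l r x0 x1 x2 x3 = {x \<in> Lam l r. \<forall>i<l+r. x i \<in> Aone (x0 i) (x1 i) (x2 i) (x3 i)}"

definition BL :: "nat \<Rightarrow> nat \<Rightarrow> (nat \<Rightarrow> IS) \<Rightarrow> (nat \<Rightarrow> IS) \<Rightarrow> (nat \<Rightarrow> IS) \<Rightarrow> (nat \<Rightarrow> IS)
    \<Rightarrow> (nat \<Rightarrow> IS) \<Rightarrow> (nat \<Rightarrow> IS) \<Rightarrow> complex" where
  "BL l r x x' x0 x1 x2 x3 =
     (\<Prod>i<l. Bone (x i) (x' i) (x0 i) (x1 i) (x2 i) (x3 i)) *
     (\<Prod>i\<in>{l..<l+r}. cnj (Bone (x i) (x' i) (x0 i) (x1 i) (x2 i) (x3 i)))"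

section \<open>Framed algebras, realised on a finite-dimensional complex space complex^'n\<close>

definition csubspace :: "(complex ^ 'n) set \<Rightarrow> bool" where
  "csubspace U \<longleftrightarrow> 0 \<in> U \<and> (\<forall>x\<in>U. \<forall>y\<in>U. x + y \<in> U) \<and> (\<forall>c. \<forall>x\<in>U. c *s x \<in> U)"

definition decomp_at :: "nat \<Rightarrow> nat \<Rightarrow> ((nat \<Rightarrow> IS) \<Rightarrow> (complex ^ 'n) set) \<Rightarrow> complex ^ 'n
    \<Rightarrow> ((nat \<Rightarrow> IS) \<Rightarrow> complex ^ 'n) \<Rightarrow> bool" where
  "decomp_at l r Sg v f \<longleftrightarrow> (\<forall>x\<in>Lam l r. f x \<in> Sg x) \<and> (\<forall>x. x \<notin> Lam l r \<longrightarrow> f x = 0)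
      \<and> v = (\<Sum>x\<in>Lam l r. f x)"

definition graded :: "nat \<Rightarrow> nat \<Rightarrow> ((nat \<Rightarrow> IS) \<Rightarrow> (complex ^ 'n) set) \<Rightarrow> bool" where
  "graded l r Sg \<longleftrightarrow> (\<forall>x. csubspace (Sg x)) \<and> (\<forall>v. \<exists>!f. decomp_at l r Sg v f)"

definition comp :: "nat \<Rightarrow> nat \<Rightarrow> ((nat \<Rightarrow> IS) \<Rightarrow> (complex ^ 'n) set) \<Rightarrow> (nat \<Rightarrow> IS)
    \<Rightarrow> complex ^ 'n \<Rightarrow> complex ^ 'n" where
  "comp l r Sg x v = (THE f. decomp_at l r Sg v f) x"

definition cbilinear :: "(complex ^ 'n \<Rightarrow> complex ^ 'n \<Rightarrow> complex ^ 'n) \<Rightarrow> bool" where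
  "cbilinear m \<longleftrightarrow> (\<forall>a b c. m (a + b) c = m a c + m b c \<and> m a (b + c) = m a b + m a c)
     \<and> (\<forall>k a b. m (k *s a) b = k *s m a b \<and> m a (k *s b) = k *s m a b)"

abbreviation zeroL :: "nat \<Rightarrow> IS" where "zeroL \<equiv> (\<lambda>_. I0)"

definition framed_algebra :: "nat \<Rightarrow> nat \<Rightarrow> ((nat \<Rightarrow> IS) \<Rightarrow> (complex ^ 'n) set)
    \<Rightarrow> (complex ^ 'n \<Rightarrow> complex ^ 'n \<Rightarrow> complex ^ 'n) \<Rightarrow> complex ^ 'n \<Rightarrow> bool" where
  "framed_algebra l r Sg m u \<longleftrightarrow>
     graded l r Sg \<and> cbilinear m \<and> u \<noteq> 0 \<and>
     \<comment> \<open>FA1\<close>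
     (\<forall>x\<in>Lam l r. sgrade l r x \<notin> \<int> \<longrightarrow> Sg x = {0}) \<and>
     \<comment> \<open>FA2\<close>
     Sg zeroL = {c *s u | c. True} \<and> (\<forall>a. m u a = a \<and> m a u = a) \<and>
     \<comment> \<open>FA3\<close>
     (\<forall>x1\<in>Lam l r. \<forall>x2\<in>Lam l r. \<forall>a\<in>Sg x1. \<forall>b\<in>Sg x2. \<forall>x\<in>Lam l r.
        x \<notin> fusionL l r x1 x2 \<longrightarrow> comp l r Sg x (m a b) = 0) \<and>
     \<comment> \<open>FA4\<close>
     (\<forall>x0\<in>Lam l r. \<forall>x1\<in>Lam l r. \<forall>x2\<in>Lam l r. \<forall>x3\<in>Lam l r.
      \<forall>a1\<in>Sg x1. \<forall>a2\<in>Sg x2. \<forall>a3\<in>Sg x3. \<forall>x'\<in>AL l r x0 x2 x1 x3.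
        comp l r Sg x0 (m a2 (comp l r Sg x' (m a1 a3))) =
        (\<Sum>x\<in>AL l r x0 x1 x2 x3.
           BL l r x x' x0 x1 x2 x3 *s comp l r Sg x0 (m a1 (comp l r Sg x (m a2 a3)))))"

definition framed_ideal :: "nat \<Rightarrow> nat \<Rightarrow> ((nat \<Rightarrow> IS) \<Rightarrow> (complex ^ 'n) set)
    \<Rightarrow> (complex ^ 'n \<Rightarrow> complex ^ 'n \<Rightarrow> complex ^ 'n) \<Rightarrow> (complex ^ 'n) set \<Rightarrow> bool" where
  "framed_ideal l r Sg m M \<longleftrightarrow> csubspace M \<and> (\<forall>v\<in>M. \<forall>x\<in>Lam l r. comp l r Sg x v \<in> M)
     \<and> (\<forall>a. \<forall>v\<in>M. m a v \<in> M)"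

definition simple_framed_algebra :: "nat \<Rightarrow> nat \<Rightarrow> ((nat \<Rightarrow> IS) \<Rightarrow> (complex ^ 'n) set)
    \<Rightarrow> (complex ^ 'n \<Rightarrow> complex ^ 'n \<Rightarrow> complex ^ 'n) \<Rightarrow> complex ^ 'n \<Rightarrow> bool" where
  "simple_framed_algebra l r Sg m u \<longleftrightarrow> framed_algebra l r Sg m u \<and>
     (\<forall>M. framed_ideal l r Sg m M \<longrightarrow> M = {0} \<or> M = UNIV)"

section \<open>Z_2^(l+r) as subsets of {..<l+r}; (d,c) coordinates\<close>

definition Z2pow :: "nat \<Rightarrow> nat set monoid" where
  "Z2pow n = \<lparr>carrier = Pow {..<n}, monoid.mult = (\<lambda>A B. (A - B) \<union> (B - A)), one = {}\<rparr>"

text \<open>(d,c) with dc = 0 corresponds to the grading: 1/16 on d, 1/2 on c, 0 elsewhere.\<close>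
definition grade_dc :: "nat set \<Rightarrow> nat set \<Rightarrow> nat \<Rightarrow> IS" where
  "grade_dc d c i = (if i \<in> d then I16 else if i \<in> c then Ihalf else I0)"

definition C_S :: "nat \<Rightarrow> nat \<Rightarrow> ((nat \<Rightarrow> IS) \<Rightarrow> (complex ^ 'n) set) \<Rightarrow> nat set set" where
  "C_S l r Sg = {\<alpha>. \<alpha> \<subseteq> {..<l+r} \<and> Sg (grade_dc {} \<alpha>) \<noteq> {0}}"

definition D_S :: "nat \<Rightarrow> nat \<Rightarrow> ((nat \<Rightarrow> IS) \<Rightarrow> (complex ^ 'n) set) \<Rightarrow> nat set set" where
  "D_S l r Sg = {d. d \<subseteq> {..<l+r} \<and>
     (\<exists>c. c \<subseteq> {..<l+r} \<and> d \<inter> c = {} \<and> Sg (grade_dc d c) \<noteq> {0})}"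

text \<open>|c| = |c|_l - |c|_r\<close>
definition wt :: "nat \<Rightarrow> nat \<Rightarrow> nat set \<Rightarrow> int" where
  "wt l r c = int (card (c \<inter> {..<l})) - int (card (c \<inter> {l..<l+r}))"

end

theory Submission
  imports Defs
begin

(* Everything rests on one consequence of simplicity: the product of two nonzero homogeneous
  elements is nonzero. For homogeneous a \<noteq> 0, the elements all of whose homogeneous components
  are annihilated by a from the left form an ideal (FA4 lets a pass a homogeneous left factor),
  and this ideal misses the unit, so it is zero. Hence the grades of nonzero pieces are closed
  under fusion, which in (d,c) coordinates says that C_S and D_S are closed under symmetric
  difference. By FA1 a nonzero piece of grade (d,c) has integral weight |d|/16 + |c|/2, which
  gives the divisibility statements. Finally, moving a \<in> S_(0,\<alpha>) past b \<in> S_(d,c) twice by FA4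
  multiplies the nonzero product ab by (-1)^|\<alpha> \<inter> d|, so |\<alpha> \<inter> d| is even. *)

lemma UNIV_IS: "(UNIV :: IS set) = {I0, Ihalf, I16}"
  using IS.exhaust by auto

lemma finite_Lam: "finite (Lam l r)"
proof (rule finite_subset)
  show "Lam l r \<subseteq> {x. \<forall>i. (i \<in> {..<l+r} \<longrightarrow> x i \<in> UNIV) \<and> (i \<notin> {..<l+r} \<longrightarrow> x i = I0)}"
    by (auto simp: Lam_def)
  show "finite \<dots>"
    by (rule finite_set_of_finite_funs) (simp_all add: UNIV_IS)
qed

lemma fusion_I0_right [simp]: "fusion h I0 = {h}"
  by (cases h) auto

lemma fusion_commute: "fusion h1 h2 = fusion h2 h1"
  by (cases h1; cases h2) auto

lemma fusionL_commute: "fusionL l r x1 x2 = fusionL l r x2 x1"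
  by (simp add: fusionL_def fusion_commute)

lemma AL_zeroL:
  assumes "x2 \<in> Lam l r" "x0 \<in> fusionL l r x1 x2"
  shows "AL l r x0 x1 x2 zeroL = {x2}"
proof -
  have "x = x2" if "x \<in> AL l r x0 x1 x2 zeroL" for x
  proof
    fix i
    show "x i = x2 i"
      using that assms(1) by (cases "i < l + r") (auto simp: AL_def Aone_def Lam_def)
  qed
  then show ?thesis
    using assms by (auto simp: AL_def Aone_def fusionL_def)
qed

lemma Bone_double_braiding:
  assumes "h0 \<in> fusion h1 h2" "h1 \<noteq> I16"
  shows "Bone h1 h2 h0 h2 h1 I0 * Bone h2 h1 h0 h1 h2 I0
    = (if h1 = Ihalf \<and> h2 = I16 then -1 else 1)"
  using assms by (cases h1; cases h2; cases h0) (auto simp: Bone_def)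

lemma BL_double_braiding:
  assumes "\<forall>i<l+r. x0 i \<in> fusion (x1 i) (x2 i)" "\<forall>i<l+r. x1 i \<noteq> I16"
  shows "BL l r x1 x2 x0 x2 x1 zeroL * BL l r x2 x1 x0 x1 x2 zeroL
    = (-1) ^ card {i. i < l + r \<and> x1 i = Ihalf \<and> x2 i = I16}"
proof -
  define P where "P i \<longleftrightarrow> x1 i = Ihalf \<and> x2 i = I16" for i
  define s :: "nat \<Rightarrow> complex" where "s i = (if P i then -1 else 1)" for i
  define b where
    "b i = Bone (x1 i) (x2 i) (x0 i) (x2 i) (x1 i) I0 * Bone (x2 i) (x1 i) (x0 i) (x1 i) (x2 i) I0"
    for i
  have coord: "b i = s i" if "i < l + r" for i
    unfolding b_def s_def P_def using assms that by (intro Bone_double_braiding) auto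
  have "BL l r x1 x2 x0 x2 x1 zeroL * BL l r x2 x1 x0 x1 x2 zeroL
      = (\<Prod>i<l. b i) * (\<Prod>i\<in>{l..<l+r}. cnj (b i))"
    unfolding BL_def b_def complex_cnj_mult prod.distrib by (simp only: mult_ac)
  also have "\<dots> = (\<Prod>i<l. s i) * (\<Prod>i\<in>{l..<l+r}. s i)"
    using coord by (auto simp: s_def intro!: prod.cong arg_cong2[where f = "(*)"])
  also have "\<dots> = (\<Prod>i<l+r. s i)"
    by (metis atLeast0LessThan le_add1 prod.atLeastLessThan_concat zero_le)
  also have "\<dots> = (-1) ^ card {i. i < l + r \<and> P i}"
    by (simp add: s_def prod.If_cases Int_def)
  finally show ?thesis unfolding P_def .
qed

lemma grade_dc_in_Lam: "d \<subseteq> {..<l+r} \<Longrightarrow> c \<subseteq> {..<l+r} \<Longrightarrow> grade_dc d c \<in> Lam l r"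
  by (auto simp: Lam_def grade_dc_def)

lemma grade_dc_empty: "grade_dc {} {} = zeroL"
  by (simp add: grade_dc_def fun_eq_iff)

lemma fusionL_grade_dc:
  assumes "x \<in> fusionL l r (grade_dc d1 c1) (grade_dc d2 c2)" "d1 \<subseteq> {..<l+r}" "d2 \<subseteq> {..<l+r}"
  obtains c where "c \<subseteq> {..<l+r}" "sym_diff d1 d2 \<inter> c = {}" "x = grade_dc (sym_diff d1 d2) c"
proof -
  define c where "c = {i. i < l + r \<and> x i = Ihalf}"
  have I16: "x i = I16 \<longleftrightarrow> i \<in> sym_diff d1 d2" if "i < l + r" for i
  proof -
    have "x i \<in> fusion (grade_dc d1 c1 i) (grade_dc d2 c2 i)"
      using assms(1) that by (simp add: fusionL_def)
    then show ?thesis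
      by (cases "x i") (auto simp: grade_dc_def split: if_splits)
  qed
  have "x = grade_dc (sym_diff d1 d2) c"
  proof
    fix i
    show "x i = grade_dc (sym_diff d1 d2) c i"
    proof (cases "i < l + r")
      case True
      then show ?thesis
        using I16[OF True] by (cases "x i") (auto simp: c_def grade_dc_def)
    next
      case False
      then show ?thesis
        using assms by (auto simp: fusionL_def Lam_def grade_dc_def c_def)
    qed
  qed
  moreover have "sym_diff d1 d2 \<inter> c = {}"
    using I16 unfolding c_def by fastforce
  ultimately show ?thesis
    by (intro that[of c]) (auto simp: c_def)
qed

lemma fusionL_grade_dc_empty:
  assumes "\<alpha> \<subseteq> {..<l+r}" "\<beta> \<subseteq> {..<l+r}"
  shows "fusionL l r (grade_dc {} \<alpha>) (grade_dc {} \<beta>) = {grade_dc {} (sym_diff \<alpha> \<beta>)}"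
proof -
  have "x = grade_dc {} (sym_diff \<alpha> \<beta>)" if "x \<in> fusionL l r (grade_dc {} \<alpha>) (grade_dc {} \<beta>)" for x
  proof
    fix i
    show "x i = grade_dc {} (sym_diff \<alpha> \<beta>) i"
      using that assms by (cases "i < l + r") (auto simp: fusionL_def Lam_def grade_dc_def)
  qed
  moreover have "grade_dc {} (sym_diff \<alpha> \<beta>) \<in> fusionL l r (grade_dc {} \<alpha>) (grade_dc {} \<beta>)"
    using assms by (auto simp: fusionL_def Lam_def grade_dc_def)
  ultimately show ?thesis
    by blast
qed

lemma wt_empty [simp]: "wt l r {} = 0"
  by (simp add: wt_def)

lemma sgrade_grade_dc:
  assumes "d \<inter> c = {}"
  shows "sgrade l r (grade_dc d c) = of_int (wt l r d) / 16 + of_int (wt l r c) / 2"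
proof -
  have weight: "weight (grade_dc d c i) = of_bool (i \<in> d) / 16 + of_bool (i \<in> c) / 2" for i
    using assms by (auto simp: grade_dc_def)
  have "(\<Sum>i\<in>A. weight (grade_dc d c i)) = of_nat (card (d \<inter> A)) / 16 + of_nat (card (c \<inter> A)) / 2"
    if "finite A" for A
    using that by (simp add: weight sum.distrib sum_divide_distrib[symmetric] Int_commute)
  then show ?thesis
    by (simp add: sgrade_def wt_def diff_divide_distrib)
qed

lemma sixteenth_plus_half_in_Ints:
  assumes "(of_int a / 16 + of_int b / 2 :: rat) \<in> \<int>"
  shows "16 dvd a + 8 * b"
proof -
  obtain k where "(of_int a / 16 + of_int b / 2 :: rat) = of_int k"
    using assms by (rule Ints_cases)
  then have "(of_int (a + 8 * b) :: rat) = of_int (16 * k)"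
    by simp
  then show ?thesis
    by (simp only: of_int_eq_iff) simp
qed

lemma even_wt_iff_even_card:
  assumes "X \<subseteq> {..<l+r}"
  shows "even (wt l r X) \<longleftrightarrow> even (card X)"
proof -
  have "X = (X \<inter> {..<l}) \<union> (X \<inter> {l..<l+r})"
    using assms by auto
  then have "card X = card (X \<inter> {..<l}) + card (X \<inter> {l..<l+r})"
    by (subst card_Un_disjoint[symmetric]) auto
  then show ?thesis
    by (simp add: wt_def)
qed

lemma subgroup_Z2powI:
  assumes "H \<subseteq> Pow {..<n}" "{} \<in> H" "\<And>A B. A \<in> H \<Longrightarrow> B \<in> H \<Longrightarrow> sym_diff A B \<in> H"
  shows "subgroup H (Z2pow n)"
proof
  have inv: "inv\<^bsub>Z2pow n\<^esub> A = A" if "A \<subseteq> {..<n}" for A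
    unfolding m_inv_def Z2pow_def using that by (intro the_equality) auto
  show "inv\<^bsub>Z2pow n\<^esub> A \<in> H" if "A \<in> H" for A
    using that assms(1) inv by auto
qed (use assms in \<open>auto simp: Z2pow_def\<close>)

locale graded_space =
  fixes l r :: nat and Sg :: "(nat \<Rightarrow> IS) \<Rightarrow> (complex ^ 'n) set"
  assumes graded: "graded l r Sg"
begin

abbreviation proj :: "(nat \<Rightarrow> IS) \<Rightarrow> complex ^ 'n \<Rightarrow> complex ^ 'n" where
  "proj \<equiv> comp l r Sg"

lemma subspace_Sg: "vec.subspace (Sg x)"
  using graded by (simp add: graded_def csubspace_def vec.subspace_def)

lemma decomp_at_proj: "decomp_at l r Sg v (\<lambda>x. proj x v)"
  using graded unfolding graded_def comp_def by (metis theI')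

lemma proj_unique: "decomp_at l r Sg v f \<Longrightarrow> proj x v = f x"
  using graded decomp_at_proj unfolding graded_def by metis

lemma proj_in_Sg: "x \<in> Lam l r \<Longrightarrow> proj x v \<in> Sg x"
  using decomp_at_proj by (simp add: decomp_at_def)

lemma proj_outside_Lam: "x \<notin> Lam l r \<Longrightarrow> proj x v = 0"
  using decomp_at_proj by (simp add: decomp_at_def)

lemma sum_proj: "(\<Sum>x\<in>Lam l r. proj x v) = v"
  using decomp_at_proj by (simp add: decomp_at_def)

lemma proj_homogeneous:
  assumes "y \<in> Lam l r" "p \<in> Sg y"
  shows "proj x p = (if x = y then p else 0)"
proof (rule proj_unique)
  show "decomp_at l r Sg p (\<lambda>x. if x = y then p else 0)"
    using assms finite_Lam vec.subspace_0[OF subspace_Sg] by (auto simp: decomp_at_def)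
qed

lemma linear_proj: "Vector_Spaces.linear (*s) (*s) (proj x)"
proof -
  have "proj x (v + w) = proj x v + proj x w" for v w
  proof (rule proj_unique)
    show "decomp_at l r Sg (v + w) (\<lambda>x. proj x v + proj x w)"
      using proj_in_Sg proj_outside_Lam vec.subspace_add[OF subspace_Sg]
      by (simp add: decomp_at_def sum.distrib sum_proj)
  qed
  moreover have "proj x (c *s v) = c *s proj x v" for c v
  proof (rule proj_unique)
    show "decomp_at l r Sg (c *s v) (\<lambda>x. c *s proj x v)"
      using proj_in_Sg proj_outside_Lam vec.subspace_scale[OF subspace_Sg]
      by (simp add: decomp_at_def vec.scale_sum_right[symmetric] sum_proj)
  qed
  ultimately show ?thesis
    by (simp add: Vector_Spaces.linear_iff vec.vector_space_axioms)
qed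

lemmas proj_0 = vec.linear_0[OF linear_proj]
  and proj_add = vec.linear_add[OF linear_proj]
  and proj_scale = vec.linear_scale[OF linear_proj]
  and proj_sum = vec.linear_sum[OF linear_proj]

end

locale framed_alg =
  fixes l r :: nat and Sg :: "(nat \<Rightarrow> IS) \<Rightarrow> (complex ^ 'n) set"
    and m :: "complex ^ 'n \<Rightarrow> complex ^ 'n \<Rightarrow> complex ^ 'n" and u :: "complex ^ 'n"
  assumes framed: "framed_algebra l r Sg m u"
begin

sublocale graded_space l r Sg
  using framed by unfold_locales (simp add: framed_algebra_def)

lemma linear_mult_left: "Vector_Spaces.linear (*s) (*s) (\<lambda>a. m a b)"
  using framed
  by (simp add: framed_algebra_def cbilinear_def Vector_Spaces.linear_iff vec.vector_space_axioms)

lemma linear_mult_right: "Vector_Spaces.linear (*s) (*s) (m a)"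
  using framed
  by (simp add: framed_algebra_def cbilinear_def Vector_Spaces.linear_iff vec.vector_space_axioms)

lemmas m_sum_left = vec.linear_sum[OF linear_mult_left]
  and m_zero_right = vec.linear_0[OF linear_mult_right]
  and m_add_right = vec.linear_add[OF linear_mult_right]
  and m_scale_right = vec.linear_scale[OF linear_mult_right]
  and m_sum_right = vec.linear_sum[OF linear_mult_right]

lemma unit_nonzero: "u \<noteq> 0"
  using framed by (simp add: framed_algebra_def)

lemma m_unit_right: "m a u = a"
  using framed by (simp add: framed_algebra_def)

lemma unit_in_Sg_zeroL: "u \<in> Sg zeroL"
proof -
  have "1 *s u \<in> {c *s u | c. True}" by blast
  then show ?thesis using framed by (simp add: framed_algebra_def)
qed

lemma Sg_eq_0_if_sgrade_notin_Ints: "x \<in> Lam l r \<Longrightarrow> sgrade l r x \<notin> \<int> \<Longrightarrow> Sg x = {0}"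
  using framed by (simp add: framed_algebra_def)

lemma proj_mult_notin_fusionL:
  "x1 \<in> Lam l r \<Longrightarrow> x2 \<in> Lam l r \<Longrightarrow> a \<in> Sg x1 \<Longrightarrow> b \<in> Sg x2 \<Longrightarrow> x \<in> Lam l r \<Longrightarrow>
   x \<notin> fusionL l r x1 x2 \<Longrightarrow> proj x (m a b) = 0"
  using framed unfolding framed_algebra_def by blast

lemma proj_mult_exchange:
  "x0 \<in> Lam l r \<Longrightarrow> x1 \<in> Lam l r \<Longrightarrow> x2 \<in> Lam l r \<Longrightarrow> x3 \<in> Lam l r \<Longrightarrow>
   a1 \<in> Sg x1 \<Longrightarrow> a2 \<in> Sg x2 \<Longrightarrow> a3 \<in> Sg x3 \<Longrightarrow> x' \<in> AL l r x0 x2 x1 x3 \<Longrightarrow>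
   proj x0 (m a2 (proj x' (m a1 a3))) =
   (\<Sum>x\<in>AL l r x0 x1 x2 x3. BL l r x x' x0 x1 x2 x3 *s proj x0 (m a1 (proj x (m a2 a3))))"
  using framed unfolding framed_algebra_def by blast

lemma proj_mult_commute:
  assumes "\<alpha> \<in> Lam l r" "\<beta> \<in> Lam l r" "p \<in> Sg \<alpha>" "q \<in> Sg \<beta>" "\<nu> \<in> fusionL l r \<alpha> \<beta>"
  shows "proj \<nu> (m q p) = BL l r \<beta> \<alpha> \<nu> \<alpha> \<beta> zeroL *s proj \<nu> (m p q)"
proof -
  have \<nu>: "\<nu> \<in> Lam l r"
    using assms(5) by (simp add: fusionL_def)
  have \<alpha>: "\<alpha> \<in> AL l r \<nu> \<beta> \<alpha> zeroL"
    using assms(1,5) by (auto simp: AL_def Aone_def fusionL_def fusion_commute)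
  have "proj \<nu> (m q (proj \<alpha> (m p u))) =
     (\<Sum>x\<in>AL l r \<nu> \<alpha> \<beta> zeroL. BL l r x \<alpha> \<nu> \<alpha> \<beta> zeroL *s proj \<nu> (m p (proj x (m q u))))"
    using assms \<nu> \<alpha> unit_in_Sg_zeroL by (intro proj_mult_exchange) (auto simp: Lam_def)
  then show ?thesis
    using assms by (simp add: AL_zeroL m_unit_right proj_homogeneous)
qed

lemma double_braiding_eq_1:
  assumes "\<alpha> \<in> Lam l r" "\<beta> \<in> Lam l r" "p \<in> Sg \<alpha>" "q \<in> Sg \<beta>" "\<nu> \<in> fusionL l r \<alpha> \<beta>"
    and "proj \<nu> (m p q) \<noteq> 0"
  shows "BL l r \<alpha> \<beta> \<nu> \<beta> \<alpha> zeroL * BL l r \<beta> \<alpha> \<nu> \<alpha> \<beta> zeroL = 1"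
proof -
  have "proj \<nu> (m p q) = BL l r \<alpha> \<beta> \<nu> \<beta> \<alpha> zeroL *s proj \<nu> (m q p)"
    using assms by (intro proj_mult_commute) (auto simp: fusionL_commute)
  also have "\<dots> = (BL l r \<alpha> \<beta> \<nu> \<beta> \<alpha> zeroL * BL l r \<beta> \<alpha> \<nu> \<alpha> \<beta> zeroL) *s proj \<nu> (m p q)"
    using assms by (simp add: proj_mult_commute)
  finally show ?thesis
    using assms(6) by (metis vector_mul_rcancel vector_smult_lid)
qed

lemma dvd_wt_if_Sg_nonzero:
  assumes "d \<subseteq> {..<l+r}" "c \<subseteq> {..<l+r}" "d \<inter> c = {}" "Sg (grade_dc d c) \<noteq> {0}"
  shows "16 dvd wt l r d + 8 * wt l r c"
proof (rule sixteenth_plus_half_in_Ints)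
  show "(of_int (wt l r d) / 16 + of_int (wt l r c) / 2 :: rat) \<in> \<int>"
    using assms Sg_eq_0_if_sgrade_notin_Ints[OF grade_dc_in_Lam] by (metis sgrade_grade_dc)
qed

lemma proj_mult_proj_mult_eq_0:
  assumes "\<eta> \<in> Lam l r" "a \<in> Sg \<eta>" "\<sigma> \<in> Lam l r" "\<tau> \<in> Lam l r" "\<rho> \<in> Lam l r" "\<nu> \<in> Lam l r"
    and "x \<in> Sg \<sigma>" "y \<in> Sg \<tau>" "\<forall>\<kappa>\<in>Lam l r. proj \<kappa> (m a y) = 0"
  shows "proj \<nu> (m a (proj \<rho> (m x y))) = 0"
proof (cases "\<rho> \<in> AL l r \<nu> \<eta> \<sigma> \<tau>")
  case True
  then have "proj \<nu> (m a (proj \<rho> (m x y))) =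
    (\<Sum>\<kappa>\<in>AL l r \<nu> \<sigma> \<eta> \<tau>. BL l r \<kappa> \<rho> \<nu> \<sigma> \<eta> \<tau> *s proj \<nu> (m x (proj \<kappa> (m a y))))"
    using assms by (intro proj_mult_exchange) auto
  also have "\<dots> = 0"
    using assms by (intro sum.neutral ballI) (auto simp: AL_def m_zero_right proj_0)
  finally show ?thesis .
next
  case False
  show ?thesis
  proof (cases "\<rho> \<in> fusionL l r \<sigma> \<tau>")
    case True
    with False have "\<nu> \<notin> fusionL l r \<eta> \<rho>"
      by (auto simp: AL_def Aone_def fusionL_def)
    then show ?thesis
      using assms proj_in_Sg by (intro proj_mult_notin_fusionL) auto
  next
    case False
    then have "proj \<rho> (m x y) = 0"
      using assms by (intro proj_mult_notin_fusionL) auto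
    then show ?thesis
      by (simp add: m_zero_right proj_0)
  qed
qed

definition left_ann :: "complex ^ 'n \<Rightarrow> (complex ^ 'n) set" where
  "left_ann a = {v. \<forall>\<rho>\<in>Lam l r. \<forall>\<nu>\<in>Lam l r. proj \<nu> (m a (proj \<rho> v)) = 0}"

lemma framed_ideal_left_ann:
  assumes "\<eta> \<in> Lam l r" "a \<in> Sg \<eta>"
  shows "framed_ideal l r Sg m (left_ann a)"
  unfolding framed_ideal_def
proof (intro conjI ballI allI)
  show "csubspace (left_ann a)"
    by (auto simp: csubspace_def left_ann_def proj_0 m_zero_right proj_add m_add_right
        proj_scale m_scale_right)
next
  fix v x
  assume "v \<in> left_ann a" "x \<in> Lam l r"
  moreover have "proj \<rho> (proj x v) = (if \<rho> = x then proj x v else 0)" for \<rho>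
    using \<open>x \<in> Lam l r\<close> by (simp add: proj_homogeneous proj_in_Sg)
  ultimately show "proj x v \<in> left_ann a"
    by (simp add: left_ann_def m_zero_right proj_0)
next
  fix b v
  assume v: "v \<in> left_ann a"
  have "proj \<nu> (m a (proj \<rho> (m b v))) = 0" if "\<rho> \<in> Lam l r" "\<nu> \<in> Lam l r" for \<rho> \<nu>
  proof -
    have "m b v = m (\<Sum>\<sigma>\<in>Lam l r. proj \<sigma> b) (\<Sum>\<tau>\<in>Lam l r. proj \<tau> v)"
      by (simp only: sum_proj)
    also have "\<dots> = (\<Sum>\<tau>\<in>Lam l r. \<Sum>\<sigma>\<in>Lam l r. m (proj \<sigma> b) (proj \<tau> v))"
      by (simp add: m_sum_left m_sum_right)
    finally have "proj \<nu> (m a (proj \<rho> (m b v))) =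
        (\<Sum>\<tau>\<in>Lam l r. \<Sum>\<sigma>\<in>Lam l r. proj \<nu> (m a (proj \<rho> (m (proj \<sigma> b) (proj \<tau> v)))))"
      by (simp add: proj_sum m_sum_right)
    also have "\<dots> = 0"
    proof (intro sum.neutral ballI)
      fix \<sigma> \<tau>
      assume "\<tau> \<in> Lam l r" "\<sigma> \<in> Lam l r"
      then show "proj \<nu> (m a (proj \<rho> (m (proj \<sigma> b) (proj \<tau> v)))) = 0"
        using assms that v proj_in_Sg
        by (intro proj_mult_proj_mult_eq_0[where \<sigma> = \<sigma> and \<tau> = \<tau>]) (auto simp: left_ann_def)
    qed
    finally show ?thesis .
  qed
  then show "m b v \<in> left_ann a"
    by (simp add: left_ann_def)
qed

lemma unit_notin_left_ann:
  assumes "\<eta> \<in> Lam l r" "a \<in> Sg \<eta>" "a \<noteq> 0"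
  shows "u \<notin> left_ann a"
proof -
  have "zeroL \<in> Lam l r"
    by (simp add: Lam_def)
  moreover have "proj \<eta> (m a (proj zeroL u)) = a"
    using assms \<open>zeroL \<in> Lam l r\<close> by (simp add: proj_homogeneous unit_in_Sg_zeroL m_unit_right)
  ultimately show ?thesis
    using assms(1,3) by (force simp: left_ann_def)
qed

lemma even_wt_C_S:
  assumes "\<alpha> \<in> C_S l r Sg"
  shows "even (wt l r \<alpha>)"
proof -
  have "16 dvd wt l r {} + 8 * wt l r \<alpha>"
    using assms by (intro dvd_wt_if_Sg_nonzero) (auto simp: C_S_def)
  then show ?thesis
    by simp presburger
qed

lemma wt_D_S_dvd_8:
  assumes "d \<in> D_S l r Sg"
  shows "8 dvd wt l r d"
proof -
  obtain c where "16 dvd wt l r d + 8 * wt l r c"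
    using assms dvd_wt_if_Sg_nonzero by (auto simp: D_S_def)
  then show ?thesis
    by presburger
qed

end

locale simple_framed_alg = framed_alg +
  assumes simple: "\<And>M. framed_ideal l r Sg m M \<Longrightarrow> M = {0} \<or> M = UNIV"
begin

lemma homogeneous_mult_nonzero:
  assumes "\<eta> \<in> Lam l r" "\<mu> \<in> Lam l r" "Sg \<eta> \<noteq> {0}" "Sg \<mu> \<noteq> {0}"
  obtains a b \<nu> where "a \<in> Sg \<eta>" "b \<in> Sg \<mu>" "\<nu> \<in> fusionL l r \<eta> \<mu>" "proj \<nu> (m a b) \<noteq> 0"
proof -
  obtain a where a: "a \<in> Sg \<eta>" "a \<noteq> 0"
    using assms(3) vec.subspace_0[OF subspace_Sg] by blast
  obtain b where b: "b \<in> Sg \<mu>" "b \<noteq> 0"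
    using assms(4) vec.subspace_0[OF subspace_Sg] by blast
  have "left_ann a = {0}"
    using simple[OF framed_ideal_left_ann] unit_notin_left_ann assms(1) a by blast
  then have "b \<notin> left_ann a"
    using b(2) by blast
  then obtain \<rho> \<nu> where "\<rho> \<in> Lam l r" "\<nu> \<in> Lam l r" "proj \<nu> (m a (proj \<rho> b)) \<noteq> 0"
    unfolding left_ann_def by blast
  then have \<nu>: "\<nu> \<in> Lam l r" "proj \<nu> (m a b) \<noteq> 0"
    using assms(2) b(1) by (auto simp: proj_homogeneous m_zero_right proj_0 split: if_splits)
  then have "\<nu> \<in> fusionL l r \<eta> \<mu>"
    using assms a b proj_mult_notin_fusionL by blast
  then show ?thesis
    using that a(1) b(1) \<nu>(2) by blast
qed

lemma sym_diff_C_S: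
  assumes "\<alpha> \<in> C_S l r Sg" "\<beta> \<in> C_S l r Sg"
  shows "sym_diff \<alpha> \<beta> \<in> C_S l r Sg"
proof -
  have \<alpha>: "\<alpha> \<subseteq> {..<l+r}" "Sg (grade_dc {} \<alpha>) \<noteq> {0}"
    and \<beta>: "\<beta> \<subseteq> {..<l+r}" "Sg (grade_dc {} \<beta>) \<noteq> {0}"
    using assms by (auto simp: C_S_def)
  then obtain a b \<nu> where "a \<in> Sg (grade_dc {} \<alpha>)" "b \<in> Sg (grade_dc {} \<beta>)"
    and \<nu>: "\<nu> \<in> fusionL l r (grade_dc {} \<alpha>) (grade_dc {} \<beta>)" "proj \<nu> (m a b) \<noteq> 0"
    using homogeneous_mult_nonzero[OF grade_dc_in_Lam grade_dc_in_Lam] by blast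
  have "\<nu> = grade_dc {} (sym_diff \<alpha> \<beta>)"
    using \<nu>(1) fusionL_grade_dc_empty[OF \<alpha>(1) \<beta>(1)] by blast
  then have "Sg (grade_dc {} (sym_diff \<alpha> \<beta>)) \<noteq> {0}"
    using \<nu> proj_in_Sg by (force simp: fusionL_def)
  then show ?thesis
    using \<alpha>(1) \<beta>(1) by (auto simp: C_S_def)
qed

lemma sym_diff_D_S:
  assumes "d1 \<in> D_S l r Sg" "d2 \<in> D_S l r Sg"
  shows "sym_diff d1 d2 \<in> D_S l r Sg"
proof -
  obtain c1 c2 where d1: "d1 \<subseteq> {..<l+r}" "c1 \<subseteq> {..<l+r}" "Sg (grade_dc d1 c1) \<noteq> {0}"
    and d2: "d2 \<subseteq> {..<l+r}" "c2 \<subseteq> {..<l+r}" "Sg (grade_dc d2 c2) \<noteq> {0}"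
    using assms by (auto simp: D_S_def)
  then obtain a b \<nu> where "a \<in> Sg (grade_dc d1 c1)" "b \<in> Sg (grade_dc d2 c2)"
    and \<nu>: "\<nu> \<in> fusionL l r (grade_dc d1 c1) (grade_dc d2 c2)" "proj \<nu> (m a b) \<noteq> 0"
    using homogeneous_mult_nonzero[OF grade_dc_in_Lam grade_dc_in_Lam] by blast
  obtain c where c: "c \<subseteq> {..<l+r}" "sym_diff d1 d2 \<inter> c = {}"
    and \<nu>_eq: "\<nu> = grade_dc (sym_diff d1 d2) c"
    using fusionL_grade_dc[OF \<nu>(1) d1(1) d2(1)] .
  have "Sg (grade_dc (sym_diff d1 d2) c) \<noteq> {0}"
    using \<nu> \<nu>_eq proj_in_Sg by (force simp: fusionL_def)
  then show ?thesis
    using d1(1) d2(1) c unfolding D_S_def by blast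
qed

lemma even_wt_inter_C_S_D_S:
  assumes "\<alpha> \<in> C_S l r Sg" "d \<in> D_S l r Sg"
  shows "even (wt l r (\<alpha> \<inter> d))"
proof -
  obtain c where \<alpha>: "\<alpha> \<subseteq> {..<l+r}" "Sg (grade_dc {} \<alpha>) \<noteq> {0}"
    and d: "d \<subseteq> {..<l+r}" "c \<subseteq> {..<l+r}" "Sg (grade_dc d c) \<noteq> {0}"
    using assms by (auto simp: C_S_def D_S_def)
  let ?x = "grade_dc {} \<alpha>" and ?y = "grade_dc d c"
  have x: "?x \<in> Lam l r" and y: "?y \<in> Lam l r"
    using \<alpha> d by (auto intro: grade_dc_in_Lam)
  obtain a b \<nu> where ab: "a \<in> Sg ?x" "b \<in> Sg ?y"
    and \<nu>: "\<nu> \<in> fusionL l r ?x ?y" "proj \<nu> (m a b) \<noteq> 0"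
    using homogeneous_mult_nonzero[OF x y \<alpha>(2) d(3)] by blast
  have "{i. i < l + r \<and> ?x i = Ihalf \<and> ?y i = I16} = \<alpha> \<inter> d"
    using \<alpha>(1) by (auto simp: grade_dc_def)
  then have "(-1) ^ card (\<alpha> \<inter> d) = BL l r ?x ?y \<nu> ?y ?x zeroL * BL l r ?y ?x \<nu> ?x ?y zeroL"
    using \<nu>(1) by (simp add: BL_double_braiding fusionL_def grade_dc_def)
  also have "\<dots> = 1"
    using x y ab \<nu> by (rule double_braiding_eq_1)
  finally have "even (card (\<alpha> \<inter> d))"
    by (simp add: minus_one_power_iff split: if_splits)
  then show ?thesis
    using \<alpha>(1) by (simp add: even_wt_iff_even_card le_infI1)
qed

lemma subgroup_C_S: "subgroup (C_S l r Sg) (Z2pow (l + r))"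
proof (rule subgroup_Z2powI[OF _ _ sym_diff_C_S])
  show "{} \<in> C_S l r Sg"
    using unit_in_Sg_zeroL unit_nonzero by (auto simp: C_S_def grade_dc_empty)
qed (auto simp: C_S_def)

lemma subgroup_D_S: "subgroup (D_S l r Sg) (Z2pow (l + r))"
proof (rule subgroup_Z2powI[OF _ _ sym_diff_D_S])
  show "{} \<in> D_S l r Sg"
    using unit_in_Sg_zeroL unit_nonzero by (auto simp: D_S_def grade_dc_empty)
qed (auto simp: D_S_def)

end

theorem mainTheorem5:
  fixes Sg :: "(nat \<Rightarrow> IS) \<Rightarrow> (complex ^ 'n) set"
    and m :: "complex ^ 'n \<Rightarrow> complex ^ 'n \<Rightarrow> complex ^ 'n"
    and u :: "complex ^ 'n"
  assumes "simple_framed_algebra l r Sg m u"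
  shows "subgroup (C_S l r Sg) (Z2pow (l + r)) \<and> subgroup (D_S l r Sg) (Z2pow (l + r))
    \<and> (\<forall>\<alpha>\<in>C_S l r Sg. even (wt l r \<alpha>)) \<and> (\<forall>d\<in>D_S l r Sg. 8 dvd wt l r d)
    \<and> (\<forall>\<alpha>\<in>C_S l r Sg. \<forall>d\<in>D_S l r Sg. even (wt l r (\<alpha> \<inter> d)))"
proof -
  interpret simple_framed_alg l r Sg m u
    using assms by unfold_locales (auto simp: simple_framed_algebra_def)
  show ?thesis
    using subgroup_C_S subgroup_D_S even_wt_C_S wt_D_S_dvd_8 even_wt_inter_C_S_D_S by blast
qed

end
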